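(* Let $p$ be even with $3 \le p \le \sqrt{n}$, and let $\ell$ be an integer with $p/2\le\ell$ and $\ell < n/p^2$. For $0\le m\le\ell$ let \[\mu_m = \sum_{s=0}^{\min(m,p/2)} (-1)^s\binom{m}{s}\binom{\ell-m}{p/2-s}\binom{n-\ell-m}{p/2-s}.\] Then for all $0 \le m\le \ell$, \[\frac{|\mu_m|}{\mu_0} \le \max\left\{\left(1-\frac{m}{\ell}\right)^{p/2},\ \frac{p}{n}\right\}.\]
   Context: The $\mu_m$ are the eigenvalues of the matrix $\mathbf{X}$ indexed by $\ell$-subsets of $[n]$ with $\mathbf{X}_{S,T}=\mathbf{1}_{|S\triangle T|=p}$; in particular $\mu_0 = \binom{\ell}{p/2}\binom{n-\ell}{p/2}$. Binomial coefficients $\binom{a}{b}$ are $0$ when $b<0$ or $b>a$. *)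

theory Defs
  imports Complex_Main
begin

definition mu :: "nat \<Rightarrow> nat \<Rightarrow> nat \<Rightarrow> nat \<Rightarrow> int" where
  "mu n p l m = (\<Sum>s=0..min m (p div 2).
      (-1)^s * int (m choose s) * int ((l - m) choose (p div 2 - s))
        * int ((n - l - m) choose (p div 2 - s)))"

end

theory Submission
  imports Defs
begin

text \<open>With \<open>k = p/2\<close>, \<open>\<mu>\<^sub>m\<close> is an alternating sum of the nonnegative terms
  \<open>a(s) = C(m,s) C(l-m,k-s) C(n-l-m,k-s)\<close>. They vanish for \<open>s < k-(l-m)\<close>, and since
  \<open>n > 4k\<^sup>2l\<close> the ratio \<open>a(s+1)/a(s) \<le> (m-s)(k-s)\<^sup>2/((s+1)(n-l-m-k))\<close> is at most 1 from
  there on, so \<open>|\<mu>\<^sub>m|\<close> is bounded by the first nonzero term. If \<open>m \<le> l-k\<close> this is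
  \<open>C(l-m,k) C(n-l-m,k) \<le> (1-m/l)\<^sup>k \<mu>\<^sub>0\<close>; otherwise it is at most \<open>C(l,k) C(n-l,k-1)\<close>,
  which is at most \<open>(p/n) \<mu>\<^sub>0\<close> because \<open>C(n-l,k) k = C(n-l,k-1) (n-l-k+1)\<close>.\<close>

lemma abs_alternating_sum_le_first:
  fixes a :: "nat \<Rightarrow> real"
  assumes "i \<le> j"
    and nonneg: "\<And>s. i \<le> s \<Longrightarrow> s \<le> j \<Longrightarrow> 0 \<le> a s"
    and decreasing: "\<And>s. i \<le> s \<Longrightarrow> s < j \<Longrightarrow> a (Suc s) \<le> a s"
  shows "\<bar>\<Sum>s=i..j. (-1)^s * a s\<bar> \<le> a i"
proof -
  have "0 \<le> (-1)^t * (\<Sum>s=t..j. (-1)^s * a s) \<and> (-1)^t * (\<Sum>s=t..j. (-1)^s * a s) \<le> a t"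
    if "t \<le> j" "i \<le> t" for t
    using that
  proof (induction t rule: inc_induct)
    case base
    then show ?case using nonneg[of j] by (simp flip: power_mult_distrib)
  next
    case (step t)
    have "(-1)^t * (\<Sum>s=t..j. (-1)^s * a s) = a t - (-1)^Suc t * (\<Sum>s=Suc t..j. (-1)^s * a s)"
      using step.hyps by (simp add: sum.atLeast_Suc_atMost algebra_simps flip: power_mult_distrib)
    then show ?case using step decreasing[of t] by auto
  qed
  from this[OF \<open>i \<le> j\<close> order_refl]
  have "\<bar>(-1)^i * (\<Sum>s=i..j. (-1)^s * a s)\<bar> \<le> a i" by linarith
  then show ?thesis by (simp add: abs_mult)
qed

lemma binomial_Suc_mult: "(x choose Suc r) * Suc r = (x choose r) * (x - r)"
proof (cases x)
  case (Suc y)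
  have "(Suc y choose Suc r) * Suc r = Suc y * (y choose r)"
    using Suc_times_binomial[of r y] by (simp add: mult.commute)
  moreover have "(Suc y - r) * (Suc y choose r) = Suc y * (y choose r)"
    using binomial_absorb_comp[of "Suc y" r] by simp
  ultimately show ?thesis using Suc by (simp add: mult.commute)
qed simp

lemma binomial_le_binomial_add: "x choose y \<le> (x + d) choose (y + d)"
proof (induction d)
  case (Suc d)
  then show ?case by (simp add: trans_le_add1)
qed simp

lemma binomial_le_ratio_power_binomial:
  assumes "a \<le> b" "0 < b"
  shows "real (a choose k) \<le> (real a / real b)^k * real (b choose k)"
proof (cases "k \<le> a")
  case True
  have "real (a choose k) = (\<Prod>i = 0..<k. (real a - real i) / real (k - i))"
    by (simp add: binomial_gbinomial gbinomial_altdef_of_nat)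
  also have "\<dots> \<le> (\<Prod>i = 0..<k. real a / real b * ((real b - real i) / real (k - i)))"
  proof (rule prod_mono)
    fix i assume "i \<in> {0..<k}"
    then have "0 \<le> real a - real i" using True by auto
    moreover have "(real a - real i) * real b \<le> real a * (real b - real i)"
      using assms(1) by (simp add: algebra_simps mult_right_mono)
    then have "real a - real i \<le> real a / real b * (real b - real i)"
      using assms(2) by (simp add: field_simps)
    then have "(real a - real i) / real (k - i) \<le> real a / real b * (real b - real i) / real (k - i)"
      by (rule divide_right_mono) simp
    ultimately show "0 \<le> (real a - real i) / real (k - i) \<and>
        (real a - real i) / real (k - i) \<le> real a / real b * ((real b - real i) / real (k - i))"
      by simp
  qed
  also have "\<dots> = (real a / real b)^k * real (b choose k)"
    by (simp only: binomial_gbinomial gbinomial_altdef_of_nat prod.distrib prod_constant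
        card_atLeastLessThan diff_zero)
  finally show ?thesis .
qed (simp add: binomial_eq_0)

definition mu_term :: "nat \<Rightarrow> nat \<Rightarrow> nat \<Rightarrow> nat \<Rightarrow> nat \<Rightarrow> nat" where
  "mu_term n k l m s = (m choose s) * ((l - m) choose (k - s)) * ((n - l - m) choose (k - s))"

lemma mu_eq_sum_mu_term:
  "mu n (2 * k) l m = (\<Sum>s=0..min m k. (-1)^s * int (mu_term n k l m s))"
  by (simp add: mu_def mu_term_def mult.assoc)

lemma mu_zero: "mu n (2 * k) l 0 = int (l choose k) * int ((n - l) choose k)"
  by (simp add: mu_def)

lemma mu_term_eq_0:
  assumes "s < k - (l - m)"
  shows "mu_term n k l m s = 0"
proof -
  have "l - m < k - s" using assms by arith
  then show ?thesis by (simp add: mu_term_def)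
qed

lemma mu_term_Suc_mult:
  assumes "s < k"
  shows "mu_term n k l m (Suc s) * (Suc s * (l - m - (k - Suc s)) * (n - l - m - (k - Suc s)))
    = mu_term n k l m s * ((m - s) * (k - s) * (k - s))"
proof -
  have k_s: "k - s = Suc (k - Suc s)" using assms by simp
  have "mu_term n k l m (Suc s) * (Suc s * (l - m - (k - Suc s)) * (n - l - m - (k - Suc s)))
      = ((m choose Suc s) * Suc s) * (((l - m) choose (k - Suc s)) * (l - m - (k - Suc s)))
        * (((n - l - m) choose (k - Suc s)) * (n - l - m - (k - Suc s)))"
    unfolding mu_term_def by (simp only: ac_simps)
  also have "\<dots> = ((m choose s) * (m - s)) * (((l - m) choose (k - s)) * (k - s))
        * (((n - l - m) choose (k - s)) * (k - s))"
    by (simp only: k_s binomial_Suc_mult)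
  also have "\<dots> = mu_term n k l m s * ((m - s) * (k - s) * (k - s))"
    unfolding mu_term_def by (simp only: ac_simps)
  finally show ?thesis .
qed

lemma mu_term_Suc_le:
  assumes large: "l * k^2 + 3 * l < n" and "k \<le> l" "m \<le> l"
    and s: "k - (l - m) \<le> s" "s < min m k"
  shows "mu_term n k l m (Suc s) \<le> mu_term n k l m s"
proof -
  define X where "X = Suc s * (l - m - (k - Suc s)) * (n - l - m - (k - Suc s))"
  define Y where "Y = (m - s) * (k - s) * (k - s)"
  have "1 \<le> l - m - (k - Suc s)" using s by arith
  then have "n - l - m - (k - Suc s) \<le> X"
    unfolding X_def using mult_le_mono[of 1 "Suc s * (l - m - (k - Suc s))"] by simp
  have "Y \<le> m * k^2"
    unfolding Y_def power2_eq_square by (simp add: mult.assoc mult_le_mono)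
  also have "\<dots> \<le> l * k^2" using \<open>m \<le> l\<close> by simp
  also have "\<dots> \<le> n - l - m - (k - Suc s)" using large \<open>k \<le> l\<close> \<open>m \<le> l\<close> by arith
  finally have "Y \<le> X" using \<open>n - l - m - (k - Suc s) \<le> X\<close> by simp
  have "0 < X" unfolding X_def using \<open>1 \<le> l - m - (k - Suc s)\<close> large \<open>k \<le> l\<close> \<open>m \<le> l\<close> by auto
  have "mu_term n k l m (Suc s) * X = mu_term n k l m s * Y"
    unfolding X_def Y_def using s by (intro mu_term_Suc_mult) simp
  also have "\<dots> \<le> mu_term n k l m s * X" using \<open>Y \<le> X\<close> by simp
  finally show ?thesis using \<open>0 < X\<close> by simp
qed

lemma abs_mu_le_mu_term:
  assumes large: "l * k^2 + 3 * l < n" and "k \<le> l" "m \<le> l"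
  shows "\<bar>real_of_int (mu n (2 * k) l m)\<bar> \<le> real (mu_term n k l m (k - (l - m)))"
proof -
  let ?s0 = "k - (l - m)" and ?a = "\<lambda>s. real (mu_term n k l m s)"
  have "real_of_int (mu n (2 * k) l m) = (\<Sum>s=0..min m k. (-1)^s * ?a s)"
    by (simp add: mu_eq_sum_mu_term)
  also have "\<dots> = (\<Sum>s=?s0..min m k. (-1)^s * ?a s)"
    by (rule sum.mono_neutral_right) (auto simp: mu_term_eq_0)
  finally have "real_of_int (mu n (2 * k) l m) = (\<Sum>s=?s0..min m k. (-1)^s * ?a s)" .
  moreover have "\<bar>\<Sum>s=?s0..min m k. (-1)^s * ?a s\<bar> \<le> ?a ?s0"
    using assms by (intro abs_alternating_sum_le_first) (auto intro: mu_term_Suc_le)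
  ultimately show ?thesis by simp
qed

lemma mu_term_zero_le:
  assumes "0 < l" "m \<le> l"
  shows "real (mu_term n k l m 0) \<le> (1 - real m / real l)^k * real (l choose k) * real ((n - l) choose k)"
proof -
  have "real ((l - m) choose k) \<le> (real (l - m) / real l)^k * real (l choose k)"
    using assms by (intro binomial_le_ratio_power_binomial) auto
  also have "real (l - m) / real l = 1 - real m / real l"
    using assms by (simp add: field_simps of_nat_diff)
  finally have "real ((l - m) choose k) \<le> (1 - real m / real l)^k * real (l choose k)" .
  moreover have "(n - l - m) choose k \<le> (n - l) choose k" by (simp add: binomial_right_mono)
  ultimately show ?thesis
    unfolding mu_term_def by (simp add: mult_mono)
qed

lemma mu_term_near_le:
  assumes large: "l * k^2 + 3 * l < n" and "k \<le> l" "m \<le> l" "l - m < k"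
  shows "mu_term n k l m (k - (l - m)) * n \<le> 2 * k * (l choose k) * ((n - l) choose k)"
proof -
  define j where "j = l - m"
  define N where "N = n - l"
  have j: "k - (k - j) = j" "m + j = l" "j \<le> k - 1" using assms unfolding j_def by auto
  have "l \<le> l * k^2" using \<open>l - m < k\<close> by simp
  then have N: "2 * (k - 1) \<le> N" "n \<le> 2 * (N - (k - 1))"
    using large \<open>k \<le> l\<close> unfolding N_def by arith+
  have "mu_term n k l m (k - j) = (m choose (k - j)) * ((n - l - m) choose j)"
    unfolding mu_term_def j j_def[symmetric] by simp
  also have "\<dots> \<le> (l choose k) * (N choose (k - 1))"
  proof (intro mult_le_mono)
    show "m choose (k - j) \<le> l choose k"
      using binomial_le_binomial_add[of m "k - j" j] j by simp
    have "(n - l - m) choose j \<le> N choose j" unfolding N_def by (simp add: binomial_right_mono)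
    also have "\<dots> \<le> N choose (k - 1)" using j N by (intro binomial_mono) auto
    finally show "(n - l - m) choose j \<le> N choose (k - 1)" .
  qed
  finally have "mu_term n k l m (k - j) * n \<le> (l choose k) * (N choose (k - 1)) * (2 * (N - (k - 1)))"
    using N by (intro mult_le_mono) auto
  also have "\<dots> = 2 * (l choose k) * ((N choose (k - 1)) * (N - (k - 1)))" by (simp only: ac_simps)
  also have "\<dots> = 2 * (l choose k) * ((N choose k) * k)"
    using binomial_Suc_mult[of N "k - 1"] \<open>l - m < k\<close> by simp
  finally show ?thesis unfolding j_def N_def by (simp only: ac_simps)
qed

lemma abs_mu_le_max_mu_zero:
  assumes large: "l * k^2 + 3 * l < n" and "0 < k" "k \<le> l" "m \<le> l"
  shows "\<bar>real_of_int (mu n (2 * k) l m)\<bar>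
    \<le> max ((1 - real m / real l) ^ k) (real (2 * k) / real n) * (real (l choose k) * real ((n - l) choose k))"
    (is "_ \<le> ?M * ?mu0")
proof -
  have "0 \<le> ?mu0" by simp
  have "\<bar>real_of_int (mu n (2 * k) l m)\<bar> \<le> real (mu_term n k l m (k - (l - m)))"
    using abs_mu_le_mu_term[OF large \<open>k \<le> l\<close> \<open>m \<le> l\<close>] .
  also have "\<dots> \<le> ?M * ?mu0"
  proof (cases "k \<le> l - m")
    case True
    then have "real (mu_term n k l m (k - (l - m))) \<le> (1 - real m / real l)^k * ?mu0"
      using mu_term_zero_le[of l m n k] assms by (simp add: mult.assoc)
    then show ?thesis using \<open>0 \<le> ?mu0\<close> by (meson max.cobounded1 mult_right_mono order_trans)
  next
    case False
    then have "real (mu_term n k l m (k - (l - m)) * n) \<le> real (2 * k * (l choose k) * ((n - l) choose k))"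
      using mu_term_near_le[OF large \<open>k \<le> l\<close> \<open>m \<le> l\<close>] by (simp only: of_nat_le_iff not_le)
    then have "real (mu_term n k l m (k - (l - m))) * real n \<le> real (2 * k) * ?mu0"
      by (simp add: mult.assoc)
    then have "real (mu_term n k l m (k - (l - m))) \<le> real (2 * k) / real n * ?mu0"
      using large by (simp add: field_simps)
    then show ?thesis using \<open>0 \<le> ?mu0\<close> by (meson max.cobounded2 mult_right_mono order_trans)
  qed
  finally show ?thesis .
qed

theorem lemma2:
  fixes n p l m :: nat
  assumes "even p" and "3 \<le> p" and "real p \<le> sqrt (real n)"
    and "real p / 2 \<le> real l" and "real l < real n / (real p)^2"
    and "m \<le> l"
  shows "\<bar>real_of_int (mu n p l m)\<bar> / real_of_int (mu n p l 0)
           \<le> max ((1 - real m / real l) ^ (p div 2)) (real p / real n)"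
proof -
  define k where "k = p div 2"
  have p: "p = 2 * k" and "2 \<le> k" and "k \<le> l"
    using assms(1,2,4) unfolding k_def by auto
  have "real (4 * k^2 * l) < real n"
    using assms(2,5) by (simp add: p pos_less_divide_eq algebra_simps)
  then have "4 * k^2 * l < n" by (simp only: of_nat_less_iff)
  moreover have "l \<le> l * k^2" using \<open>2 \<le> k\<close> by simp
  moreover have "4 * k^2 * l = 4 * (l * k^2)" by simp
  ultimately have large: "l * k^2 + 3 * l < n" by linarith
  have "0 < real_of_int (mu n p l 0)"
    using \<open>k \<le> l\<close> large by (simp add: p mu_zero)
  with abs_mu_le_max_mu_zero[OF large _ \<open>k \<le> l\<close> \<open>m \<le> l\<close>] \<open>2 \<le> k\<close> show ?thesis
    by (simp add: p mu_zero divide_le_eq)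
qed

end
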